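(* For a positive integer $m$ let $M=\lfloor\frac{m-1}{2}\rfloor$ and define $$\widetilde{f_{m,1}}(z)=(-1)^M\int_0^z\frac{y^{2M+2}}{1+y^2}\,dy\qquad\big(z\in\mathbb{C}\setminus([i,i\infty)\cup[-i,-i\infty))\big),$$ the integral taken along the line segment from $0$ to $z$. Let $0<c<1<C$. Then, as $m\to\infty$, uniformly in $z$ with $\frac cm\le|z-i|\le\frac Cm$ and $z\notin[i,i\infty)$, $$\widetilde{f_{m,1}}(z)=\frac1{2i}\int_1^\infty\frac{e^{-\zeta}}{\zeta}\,d\zeta-\frac1{2i}\int_1^{im(z-i)}\frac{e^{-\zeta}}{\zeta}\,d\zeta+O\!\left(\frac{\ln m}{m}\right)=O(1),$$ where the path of the second integral lies in $\{\zeta\in\mathbb{C}\setminus(-\infty,0]:c\le|\zeta|\le C\}$. *)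

theory Defs
  imports "HOL-Complex_Analysis.Complex_Analysis"
begin

definition Mm :: "nat \<Rightarrow> nat" where
  "Mm m = (m - 1) div 2"

definition ftilde :: "nat \<Rightarrow> complex \<Rightarrow> complex" where
  "ftilde m z = (-1) ^ Mm m *
     contour_integral (linepath 0 z) (\<lambda>y. y ^ (2 * Mm m + 2) / (1 + y\<^sup>2))"

definition upper_ray :: "complex set" where
  "upper_ray = {\<i> * of_real t | t. t \<ge> 1}"

definition E1one :: real where
  "E1one = integral {1..} (\<lambda>t. exp (- t) / t)"

end

theory Submission
  imports Defs
begin

text \<open>
  The substitution \<open>w = \<i> m (y - \<i>)\<close> maps the segment \<open>[0, z]\<close> onto \<open>[m, w\<^sub>0]\<close> with
  \<open>w\<^sub>0 = \<i> m (z - \<i>)\<close>, and turns \<open>ftilde m z\<close> into \<open>-(P w\<^sub>0 - P m) / (2\<i>)\<close> for a primitive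
  \<open>P\<close> of \<open>phi m w = (1 - w/m)^k / ((1 - w/(2m)) w)\<close>, where \<open>k = 2M + 2 \<in> {m, m + 1}\<close>.
  Splitting at \<open>w = 1\<close>, compare \<open>P\<close> with a primitive \<open>R\<close> of \<open>exp (-w) / w\<close>. On \<open>[1, m]\<close> the two
  integrands differ by at most \<open>11 / (m x)\<close>, an error \<open>O(ln m / m)\<close>, and \<open>R m - R 1\<close> is the
  exponential integral up to its tail \<open>\<le> exp (-m)\<close>. The point \<open>w\<^sub>0\<close> lies in the slit annulus
  \<open>c \<le> |w| \<le> C\<close>, where the integrands differ by \<open>O(1/m)\<close>; joining \<open>1\<close> to \<open>w\<^sub>0\<close> by an arc of the
  unit circle and a radial segment, a path of length at most \<open>\<pi> + C\<close> inside the annulus, gives an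
  error \<open>O(1/m)\<close> for \<open>P w\<^sub>0 - P 1\<close> against \<open>R w\<^sub>0 - R 1\<close>, which is the contour integral of the
  statement along any path in the annulus.
\<close>

section \<open>Comparing \<open>(1 - z/m)^k\<close> with \<open>exp (-z)\<close>\<close>

lemma Mm_exponent_bounds:
  assumes "1 \<le> m"
  shows "m \<le> 2 * Mm m + 2" "2 * Mm m + 2 \<le> m + 1"
  using assms unfolding Mm_def by presburger+

lemma power2_le_4_exp:
  fixes t :: real
  assumes "0 \<le> t"
  shows "t\<^sup>2 \<le> 4 * exp t"
proof -
  have "t/2 \<le> exp (t/2)" using exp_ge_add_one_self[of "t/2"] by linarith
  then have "(t/2)\<^sup>2 \<le> (exp (t/2))\<^sup>2" using assms by (intro power_mono) auto
  also have "(exp (t/2))\<^sup>2 = exp t" by (simp flip: exp_of_nat_mult)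
  finally show ?thesis by (simp add: power_divide)
qed

lemma norm_divide_sub_le:
  fixes u d e :: "'a::real_normed_field"
  assumes d: "1/2 \<le> norm d"
  shows "norm (u / d - e) \<le> 2 * (norm (u - e) + norm e * norm (1 - d))"
proof -
  have "d \<noteq> 0" using d by auto
  then have "u / d - e = ((u - e) + e * (1 - d)) / d" by (simp add: field_simps)
  then have "norm (u / d - e) = norm ((u - e) + e * (1 - d)) / norm d" by (simp add: norm_divide)
  also have "\<dots> \<le> (norm (u - e) + norm e * norm (1 - d)) / (1/2)"
    using d by (intro frac_le) (auto intro: norm_triangle_le simp: norm_mult)
  finally show ?thesis by simp
qed

lemma power_one_minus_le_exp:
  fixes t :: real and m j :: nat
  assumes "1 \<le> m" "0 \<le> t" "t \<le> m" "m \<le> j"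
  shows "(1 - t/m)^j \<le> exp (-t)"
proof -
  have mpos: "0 < real m" using assms by simp
  have "(1 - t/m)^j \<le> exp (-t/m)^j"
    using exp_ge_add_one_self[of "-t/m"] assms mpos by (intro power_mono) (simp_all add: field_simps)
  also have "\<dots> = exp (- (j * t / m))" by (simp flip: exp_of_nat_mult)
  also have "\<dots> \<le> exp (-t)"
    using assms mpos by (simp add: field_simps mult_left_mono)
  finally show ?thesis .
qed

text \<open>Bernoulli's inequality for \<open>(1 - (t/m)\<^sup>2)^m = (1 + t/m)^m (1 - t/m)^m\<close>,
  followed by \<open>1 + t/m \<le> exp (t/m)\<close>.\<close>
lemma exp_neg_mult_le_power_one_minus:
  fixes t :: real and m :: nat
  assumes "0 \<le> t" "t \<le> m"
  shows "exp (-t) * (1 - t\<^sup>2/m) \<le> (1 - t/m)^m"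
proof (cases "m = 0")
  case False
  then have mpos: "0 < real m" by simp
  have "1 - t\<^sup>2/m = 1 + real m * (- (t/m)\<^sup>2)" using mpos by (simp add: power2_eq_square field_simps)
  also have "\<dots> \<le> (1 + (- (t/m)\<^sup>2))^m"
    using assms mpos by (intro Bernoulli_inequality) (simp add: power_le_one)
  also have "1 + (- (t/m)\<^sup>2) = (1 + t/m) * (1 - t/m)" by (simp add: power2_eq_square algebra_simps)
  also have "((1 + t/m) * (1 - t/m))^m \<le> (exp (t/m) * (1 - t/m))^m"
    using exp_ge_add_one_self[of "t/m"] assms mpos by (intro power_mono mult_right_mono) auto
  also have "(exp (t/m) * (1 - t/m))^m = exp t * (1 - t/m)^m"
    using mpos by (simp add: power_mult_distrib flip: exp_of_nat_mult)
  finally show ?thesis by (simp add: exp_minus field_simps)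
qed (use assms in simp)

lemma abs_power_one_minus_sub_exp_le:
  fixes t :: real and m k :: nat
  assumes m: "1 \<le> m" and k: "m \<le> k" "k \<le> m + 1" and t: "0 \<le> t" "t \<le> m"
  shows "\<bar>(1 - t/m)^k - exp (-t)\<bar> \<le> 5/m"
proof -
  define a where "a = 1 - t/m"
  have mpos: "0 < real m" using m by simp
  have a0: "0 \<le> a" and a1: "a \<le> 1" using t mpos by (auto simp: a_def field_simps)
  have "exp (-t) - exp (-t) * t\<^sup>2/m \<le> a^m"
    using exp_neg_mult_le_power_one_minus[OF t] by (simp add: a_def right_diff_distrib)
  moreover have "a^m - a^m * (t/m) \<le> a^k"
  proof -
    have "a^(m+1) \<le> a^k" using k a0 a1 by (intro power_decreasing) auto
    then show ?thesis by (simp add: a_def algebra_simps)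
  qed
  moreover have "exp (-t) * t\<^sup>2/m \<le> 4/m"
    using power2_le_4_exp[OF t(1)] mpos by (simp add: exp_minus field_simps)
  moreover have "a^m * (t/m) \<le> 1/m"
  proof -
    have "a^m * (t/m) \<le> exp (-t) * (t/m)"
      using power_one_minus_le_exp[OF m t order_refl] t mpos by (intro mult_right_mono) (auto simp: a_def)
    also have "\<dots> \<le> 1/m"
      using exp_ge_add_one_self[of t] mpos by (simp add: exp_minus field_simps del: exp_ge_add_one_self)
    finally show ?thesis .
  qed
  moreover have "a^k \<le> exp (-t)" using power_one_minus_le_exp[OF m t k(1)] by (simp add: a_def)
  ultimately show ?thesis unfolding a_def[symmetric] by (simp add: abs_if field_simps)
qed

lemma abs_power_one_minus_div_sub_exp_le:
  fixes t :: real and m k :: nat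
  assumes "1 \<le> m" "m \<le> k" "k \<le> m + 1" "0 \<le> t" "t \<le> m"
  shows "\<bar>(1 - t/m)^k / (1 - t / (2 * real m)) - exp (-t)\<bar> \<le> 11/m"
proof -
  have mpos: "0 < real m" using assms by simp
  have d: "1/2 \<le> norm (1 - t / (2 * real m))" using assms by (simp add: field_simps)
  have "t \<le> exp t" using exp_ge_add_one_self[of t] by linarith
  then have e: "exp (-t) * \<bar>1 - (1 - t / (2 * real m))\<bar> \<le> 1 / (2 * real m)"
    using assms mpos by (simp add: exp_minus field_simps)
  have "\<bar>(1 - t/m)^k / (1 - t / (2 * real m)) - exp (-t)\<bar>
      \<le> 2 * (\<bar>(1 - t/m)^k - exp (-t)\<bar> + exp (-t) * \<bar>1 - (1 - t / (2 * real m))\<bar>)"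
    using norm_divide_sub_le[OF d, of "(1 - t/m)^k" "exp (-t)"] by simp
  also have "\<dots> \<le> 2 * (5/m + 1 / (2 * real m))"
    using abs_power_one_minus_sub_exp_le[OF assms] e by (intro mult_left_mono add_mono) auto
  also have "\<dots> = 11/m" by (simp add: field_simps)
  finally show ?thesis .
qed

lemma norm_one_minus_sub_exp_le:
  fixes w :: complex
  assumes "cmod w \<le> 1"
  shows "cmod (1 - w - exp (-w)) \<le> exp 1 * (cmod w)\<^sup>2"
proof -
  have "cmod (exp (-w) - (\<Sum>i\<le>1. (-w)^i / fact i)) \<le> exp (cmod w) * (cmod w)\<^sup>2"
    using Taylor_exp_field[of "-w" 1] by (simp add: power2_eq_square)
  also have "\<dots> \<le> exp 1 * (cmod w)\<^sup>2" using assms by (intro mult_right_mono) auto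
  finally show ?thesis by (simp add: norm_minus_commute)
qed

lemma norm_exp_sub_one_le:
  fixes w :: complex
  shows "cmod (exp w - 1) \<le> exp (cmod w) * cmod w"
  using Taylor_exp_field[of w 0] by simp

lemma norm_power_sub_power_le:
  fixes u v :: complex
  assumes R: "1 \<le> R" and "cmod u \<le> R" "cmod v \<le> R"
  shows "cmod (u^k - v^k) \<le> R^k * (k * cmod (u - v))"
proof -
  have "cmod (u^k - v^k) = R^k * cmod ((u/R)^k - (v/R)^k)"
    using R by (simp add: power_divide diff_divide_distrib[symmetric] norm_divide norm_power)
  also have "\<dots> \<le> R^k * (k * cmod (u/R - v/R))"
    using assms by (intro mult_left_mono norm_power_diff) (auto simp: norm_divide)
  also have "\<dots> \<le> R^k * (k * cmod (u - v))"
  proof (intro mult_left_mono)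
    show "cmod (u/R - v/R) \<le> cmod (u - v)"
      using R by (simp add: diff_divide_distrib[symmetric] norm_divide divide_le_eq mult_le_cancel_left1)
  qed (use R in auto)
  finally show ?thesis .
qed

lemma norm_power_one_minus_sub_exp_power_le:
  fixes z :: complex and m k :: nat and C :: real
  assumes m: "1 \<le> m" and k: "k \<le> m + 1" and Cm: "C \<le> m" and z: "cmod z \<le> C"
  shows "cmod ((1 - z/m)^k - exp (- (z/m))^k) \<le> 2 * exp (2*C+1) * C\<^sup>2 / m"
proof -
  have mpos: "0 < real m" using m by simp
  define w where "w = z / of_nat m"
  have w: "cmod w \<le> C/m" using z mpos by (simp add: w_def norm_divide divide_right_mono)
  have w1: "cmod w \<le> 1" using w Cm mpos by (simp add: divide_le_eq_1 order_trans)
  have "cmod ((1 - w)^k - exp (-w)^k) \<le> exp (cmod w)^k * (k * cmod (1 - w - exp (-w)))"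
  proof (rule norm_power_sub_power_le)
    show "cmod (1 - w) \<le> exp (cmod w)"
      using norm_triangle_ineq4[of 1 w, unfolded norm_one] exp_ge_add_one_self[of "cmod w"]
      by linarith
  qed (use abs_Re_le_cmod[of w] in auto)
  also have "\<dots> \<le> exp (2*C) * ((2*m) * (exp 1 * (C/m)\<^sup>2))"
  proof (rule mult_mono)
    have "exp (cmod w)^k = exp (k * cmod w)" by (simp flip: exp_of_nat_mult)
    also have "k * cmod w \<le> (2*m) * (C/m)" using k m w by (intro mult_mono) auto
    finally show "exp (cmod w)^k \<le> exp (2*C)" using mpos by simp
    have "cmod (1 - w - exp (-w)) \<le> exp 1 * (C/m)\<^sup>2"
      using norm_one_minus_sub_exp_le[OF w1] w
      by (meson exp_ge_zero mult_left_mono norm_ge_zero order_trans power_mono)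
    then show "k * cmod (1 - w - exp (-w)) \<le> (2*m) * (exp 1 * (C/m)\<^sup>2)"
      using k m by (intro mult_mono) auto
  qed auto
  also have "\<dots> = 2 * exp (2*C+1) * C\<^sup>2 / m"
    using mpos by (simp add: power2_eq_square exp_add field_simps)
  finally show ?thesis by (simp add: w_def)
qed

lemma norm_exp_power_sub_exp_le:
  fixes z :: complex and m k :: nat and C :: real
  assumes m: "1 \<le> m" and k: "m \<le> k" "k \<le> m + 1" and Cm: "C \<le> m" and z: "cmod z \<le> C"
  shows "cmod (exp (- (z/m))^k - exp (-z)) \<le> exp (C+1) * C / m"
proof -
  have mpos: "0 < real m" using m by simp
  define w where "w = z / of_nat m"
  have w: "cmod w \<le> C/m" using z mpos by (simp add: w_def norm_divide divide_right_mono)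
  have w1: "cmod w \<le> 1" using w Cm mpos by (simp add: divide_le_eq_1 order_trans)
  have "exp (-w)^k = exp (-z) * exp (- (of_nat (k - m) * w))"
  proof -
    have "of_nat k * (-w) = -z + - (of_nat (k - m) * w)"
      using k mpos by (simp add: w_def of_nat_diff algebra_simps)
    then show ?thesis by (simp flip: exp_of_nat_mult exp_add)
  qed
  then have "cmod (exp (-w)^k - exp (-z)) = cmod (exp (-z)) * cmod (exp (- (of_nat (k - m) * w)) - 1)"
    by (metis mult.right_neutral norm_mult right_diff_distrib)
  also have "\<dots> \<le> exp C * (exp 1 * (C/m))"
  proof (rule mult_mono)
    show "cmod (exp (-z)) \<le> exp C" using abs_Re_le_cmod[of z] z by simp
    have "cmod (of_nat (k - m) * w) \<le> cmod w"
      using k by (simp add: norm_mult mult_left_le_one_le del: of_nat_diff)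
    then have "exp (cmod (of_nat (k - m) * w)) * cmod (of_nat (k - m) * w) \<le> exp 1 * (C/m)"
      using w w1 by (intro mult_mono) auto
    then show "cmod (exp (- (of_nat (k - m) * w)) - 1) \<le> exp 1 * (C/m)"
      using norm_exp_sub_one_le[of "- (of_nat (k - m) * w)"] by simp
  qed auto
  also have "\<dots> = exp (C+1) * C / m" by (simp add: exp_add)
  finally show ?thesis by (simp add: w_def)
qed

lemma norm_power_one_minus_sub_exp_le:
  fixes z :: complex and m k :: nat and C :: real
  assumes "1 \<le> m" "m \<le> k" "k \<le> m + 1" "C \<le> m" "cmod z \<le> C"
  shows "cmod ((1 - z/m)^k - exp (-z)) \<le> (2 * exp (2*C+1) * C\<^sup>2 + exp (C+1) * C) / m"
  using norm_diff_triangle_le[OF norm_power_one_minus_sub_exp_power_le norm_exp_power_sub_exp_le]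
    assms by (simp add: add_divide_distrib)

definition phi_approx_const :: "real \<Rightarrow> real" where
  "phi_approx_const C = 2 * (2 * exp (2*C+1) * C\<^sup>2 + exp (C+1) * C) + exp C * C"

lemma norm_power_one_minus_div_sub_exp_le:
  fixes z :: complex and m k :: nat and C :: real
  assumes "1 \<le> m" "m \<le> k" "k \<le> m + 1" "C \<le> m" "cmod z \<le> C"
  shows "cmod ((1 - z/m)^k / (1 - z / (2 * of_nat m)) - exp (-z)) \<le> phi_approx_const C / m"
proof -
  have mpos: "0 < real m" using assms by simp
  have n1d: "cmod (1 - (1 - z / (2 * of_nat m))) \<le> C / (2 * m)"
    using assms mpos by (simp add: norm_divide divide_right_mono)
  have d: "1/2 \<le> cmod (1 - z / (2 * of_nat m))"
  proof -
    have "C / (2 * m) \<le> 1/2" using assms mpos by (simp add: field_simps)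
    then show ?thesis using n1d norm_triangle_ineq2[of 1 "1 - z / (2 * of_nat m)"] by simp
  qed
  have "cmod ((1 - z/m)^k / (1 - z / (2 * of_nat m)) - exp (-z))
      \<le> 2 * (cmod ((1 - z/m)^k - exp (-z)) + cmod (exp (-z)) * cmod (1 - (1 - z / (2 * of_nat m))))"
    by (rule norm_divide_sub_le[OF d])
  also have "\<dots> \<le> 2 * ((2 * exp (2*C+1) * C\<^sup>2 + exp (C+1) * C) / m + exp C * (C / (2 * m)))"
    using norm_power_one_minus_sub_exp_le[OF assms] abs_Re_le_cmod[of z] assms n1d
    by (intro mult_left_mono add_mono mult_mono) auto
  also have "\<dots> = phi_approx_const C / m"
    using mpos by (simp add: phi_approx_const_def field_simps)
  finally show ?thesis .
qed

section \<open>The substituted integrand on a slit disc\<close>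

definition phi :: "nat \<Rightarrow> complex \<Rightarrow> complex" where
  "phi m w = (1 - w / of_nat m) ^ (2 * Mm m + 2) / ((1 - w / (2 * of_nat m)) * w)"

text \<open>The radius \<open>2 m\<close> keeps out the second pole \<open>w = 2 m\<close> of \<open>phi m\<close>.\<close>
definition slit_disc :: "nat \<Rightarrow> complex set" where
  "slit_disc m = - (complex_of_real ` {..0}) \<inter> ball 0 (2 * real m)"

lemma in_slot_left_iff: "w \<in> complex_of_real ` {..0} \<longleftrightarrow> Im w = 0 \<and> Re w \<le> 0"
  by (auto simp: complex_eq_iff intro: rev_image_eqI[of "Re w"])

lemma open_slit_disc: "open (slit_disc m)"
  unfolding slit_disc_def using closed_slot_left[of 0] by (intro open_Int open_ball) auto

lemma of_real_in_slit_disc: "0 < r \<Longrightarrow> r < 2 * real m \<Longrightarrow> complex_of_real r \<in> slit_disc m"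
  by (simp add: slit_disc_def in_slot_left_iff)

lemma closed_segment_subset_slit_disc:
  assumes "0 < r" "r < 2 * real m" "x \<in> slit_disc m"
  shows "closed_segment (of_real r) x \<subseteq> slit_disc m"
proof -
  have "closed_segment (of_real r) x \<subseteq> - (complex_of_real ` {..0})"
    using assms by (intro starlike_slotted_complex_plane_left_aux) (auto simp: slit_disc_def)
  moreover have "closed_segment (of_real r) x \<subseteq> ball 0 (2 * real m)"
    using assms by (intro closed_segment_subset convex_ball) (auto simp: slit_disc_def)
  ultimately show ?thesis by (simp add: slit_disc_def)
qed

lemma starlike_slit_disc: "1 \<le> m \<Longrightarrow> starlike (slit_disc m)"
  unfolding starlike_def
  using of_real_in_slit_disc[of 1 m] closed_segment_subset_slit_disc[of 1 m] by force

lemma slit_disc_primitive: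
  assumes "1 \<le> m" "f holomorphic_on slit_disc m"
  obtains P where "\<And>w. w \<in> slit_disc m \<Longrightarrow> (P has_field_derivative f w) (at w)"
proof -
  have "\<exists>P. \<forall>w\<in>slit_disc m. (P has_field_derivative f w) (at w)"
  proof (rule holomorphic_starlike_primitive[where k = "{}"])
    show "continuous_on (slit_disc m) f"
      using assms(2) holomorphic_on_imp_continuous_on by blast
    show "\<And>w. w \<in> slit_disc m - {} \<Longrightarrow> f field_differentiable at w"
      using assms(2) open_slit_disc holomorphic_on_imp_differentiable_at by blast
  qed (use assms(1) starlike_slit_disc open_slit_disc in auto)
  then show ?thesis using that by blast
qed

lemma slit_disc_avoids_poles:
  assumes "w \<in> slit_disc m"
  shows "w \<noteq> 0" "1 - w / (2 * of_nat m) \<noteq> 0"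
proof -
  show "w \<noteq> 0" using assms by (auto simp: slit_disc_def)
  have w: "cmod w < 2 * real m" using assms by (simp add: slit_disc_def)
  then have "m \<noteq> 0" by (metis mult_zero_right norm_ge_zero not_less of_nat_0)
  then show "1 - w / (2 * of_nat m) \<noteq> 0"
    using w by (auto simp: field_simps norm_mult)
qed

lemma phi_holomorphic: "phi m holomorphic_on slit_disc m"
  unfolding phi_def by (intro holomorphic_intros) (use slit_disc_avoids_poles in auto)

lemma exp_neg_div_holomorphic: "(\<lambda>w. exp (- w) / w) holomorphic_on slit_disc m"
  by (intro holomorphic_intros) (use slit_disc_avoids_poles in auto)

lemma integrand_eq_phi:
  fixes y :: complex
  assumes m: "1 \<le> m" and w: "\<i> * of_nat m * (y - \<i>) \<in> slit_disc m"
  shows "y ^ (2 * Mm m + 2) / (1 + y\<^sup>2)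
       = (-1) ^ Mm m * (- (1 / (2 * \<i>))) * phi m (\<i> * of_nat m * (y - \<i>)) * (\<i> * of_nat m)"
proof -
  define w where "w = \<i> * of_nat m * (y - \<i>)"
  define M where "M = Mm m"
  have mz: "(of_nat m :: complex) \<noteq> 0" using m by simp
  have wz: "w \<noteq> 0" and dz: "1 - w / (2 * of_nat m) \<noteq> 0"
    using slit_disc_avoids_poles[OF w] unfolding w_def by blast+
  have h1: "1 - w / of_nat m = - (\<i> * y)" using mz by (simp add: w_def field_simps)
  have h2: "(1 - w / (2 * of_nat m)) * w = of_nat m * (1 + y\<^sup>2) / 2"
    using mz by (simp add: w_def field_simps power2_eq_square)
  have yz: "1 + y\<^sup>2 \<noteq> 0" using h2 wz dz mz by auto
  have e: "2 * M + 2 = 2 * (M + 1)" by simp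
  have h3: "(- (\<i> * y)) ^ (2 * M + 2) = (-1) ^ (M + 1) * y ^ (2 * M + 2)"
  proof -
    have "(- (\<i> * y)) ^ (2 * M + 2) = ((- (\<i> * y))\<^sup>2) ^ (M + 1)"
      by (simp only: e power_mult)
    also have "(- (\<i> * y))\<^sup>2 = - (y\<^sup>2)" by (simp add: power2_eq_square algebra_simps)
    also have "(- (y\<^sup>2)) ^ (M + 1) = (-1) ^ (M + 1) * (y\<^sup>2) ^ (M + 1)"
      by (rule power_minus)
    also have "(y\<^sup>2) ^ (M + 1) = y ^ (2 * M + 2)"
      by (simp only: e power_mult)
    finally show ?thesis .
  qed
  have phi: "phi m w = (-1) ^ (M + 1) * y ^ (2 * M + 2) / (of_nat m * (1 + y\<^sup>2) / 2)"
    unfolding phi_def M_def[symmetric] h1 h2 h3 ..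
  have "(-1::complex) ^ M * (-1) ^ M = 1" by (simp flip: power_add)
  moreover have "of_nat m + of_nat m * y\<^sup>2 \<noteq> 0"
    using mz yz by (metis distrib_left mult_eq_0_iff mult.right_neutral)
  ultimately have "y ^ (2 * M + 2) / (1 + y\<^sup>2) = (-1) ^ M * (- (1 / (2 * \<i>))) *
      ((-1) ^ (M + 1) * y ^ (2 * M + 2) / (of_nat m * (1 + y\<^sup>2) / 2)) * (\<i> * of_nat m)"
    using mz yz by (simp add: field_simps)
  then show ?thesis unfolding w_def[symmetric] M_def[symmetric] phi .
qed

lemma rescaled_segment_in_slit_disc:
  assumes m: "1 \<le> m" and z: "\<i> * of_nat m * (z - \<i>) \<in> slit_disc m" and y: "y \<in> closed_segment 0 z"
  shows "\<i> * of_nat m * (y - \<i>) \<in> slit_disc m"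
proof -
  obtain u where u: "0 \<le> u" "u \<le> 1" and yu: "y = u *\<^sub>R z"
    using y by (auto simp: closed_segment_def)
  have "\<i> * of_nat m * (y - \<i>) = (1 - u) *\<^sub>R of_real (real m) + u *\<^sub>R (\<i> * of_nat m * (z - \<i>))"
    by (simp add: yu scaleR_conv_of_real algebra_simps)
  also have "\<dots> \<in> closed_segment (of_real (real m)) (\<i> * of_nat m * (z - \<i>))"
    using u by (auto simp: closed_segment_def)
  also have "\<dots> \<subseteq> slit_disc m"
    using m z by (intro closed_segment_subset_slit_disc) auto
  finally show ?thesis .
qed

lemma ftilde_eq_primitive_diff:
  assumes m: "1 \<le> m" and P: "\<And>w. w \<in> slit_disc m \<Longrightarrow> (P has_field_derivative phi m w) (at w)"
    and z: "\<i> * of_nat m * (z - \<i>) \<in> slit_disc m"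
  shows "ftilde m z = - (1 / (2 * \<i>)) * (P (\<i> * of_nat m * (z - \<i>)) - P (of_nat m))"
proof -
  define Q where "Q y = (-1) ^ Mm m * (- (1 / (2 * \<i>))) * P (\<i> * of_nat m * (y - \<i>))" for y
  have seg: "\<i> * of_nat m * (y - \<i>) \<in> slit_disc m" if "y \<in> closed_segment 0 z" for y
    using rescaled_segment_in_slit_disc[OF m z that] .
  have "(Q has_field_derivative y ^ (2 * Mm m + 2) / (1 + y\<^sup>2)) (at y within closed_segment 0 z)"
    if y: "y \<in> closed_segment 0 z" for y
  proof -
    have "((\<lambda>y. \<i> * of_nat m * (y - \<i>)) has_field_derivative \<i> * of_nat m) (at y)"
      by (auto intro!: derivative_eq_intros)
    from DERIV_chain2[OF P[OF seg[OF y]] this]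
    have "((\<lambda>y. P (\<i> * of_nat m * (y - \<i>))) has_field_derivative
            phi m (\<i> * of_nat m * (y - \<i>)) * (\<i> * of_nat m)) (at y)" .
    then have "(Q has_field_derivative (-1) ^ Mm m * (- (1 / (2 * \<i>))) *
            (phi m (\<i> * of_nat m * (y - \<i>)) * (\<i> * of_nat m))) (at y)"
      unfolding Q_def by (rule DERIV_cmult)
    also have "(-1) ^ Mm m * (- (1 / (2 * \<i>))) * (phi m (\<i> * of_nat m * (y - \<i>)) * (\<i> * of_nat m))
        = y ^ (2 * Mm m + 2) / (1 + y\<^sup>2)"
      using integrand_eq_phi[OF m seg[OF y]] by (simp only: mult.assoc)
    finally show ?thesis by (rule has_field_derivative_at_within)
  qed
  from contour_integral_primitive[of "closed_segment 0 z" Q, OF this, of "linepath 0 z"]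
  have "((\<lambda>y. y ^ (2 * Mm m + 2) / (1 + y\<^sup>2)) has_contour_integral (Q z - Q 0)) (linepath 0 z)"
    by simp
  then have "ftilde m z = (-1) ^ Mm m * (Q z - Q 0)"
    unfolding ftilde_def by (simp add: contour_integral_unique)
  also have "\<dots> = ((-1) ^ Mm m * (-1) ^ Mm m) * (- (1 / (2 * \<i>)))
                  * (P (\<i> * of_nat m * (z - \<i>)) - P (of_nat m))"
    unfolding Q_def by (simp add: algebra_simps)
  also have "(-1::complex) ^ Mm m * (-1) ^ Mm m = 1" by (simp flip: power_add)
  finally show ?thesis by simp
qed

section \<open>The segment from \<open>1\<close> to \<open>m\<close>\<close>

lemma primitive_diff_has_integral_real:
  assumes m: "2 \<le> m" and P: "\<And>w. w \<in> slit_disc m \<Longrightarrow> (P has_field_derivative f w) (at w)"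
  shows "((\<lambda>x. f (of_real x)) has_integral (P (of_nat m) - P 1)) {1..real m}"
proof -
  have "closed_segment 1 (of_nat m) \<subseteq> slit_disc m"
    using closed_segment_subset_slit_disc[of 1 m "of_nat m"] of_real_in_slit_disc[of "real m" m] m
    by simp
  then have "(f has_contour_integral (P (of_nat m) - P 1)) (linepath 1 (of_nat m))"
    using contour_integral_primitive[of "slit_disc m" P f "linepath 1 (of_nat m)"] P
    by (auto intro: has_field_derivative_at_within)
  then show ?thesis using m by (subst (asm) has_contour_integral_linepath_Reals_iff) auto
qed

lemma exp_neg_div_primitive_diff_eq_integral:
  assumes m: "2 \<le> m" and R: "\<And>w. w \<in> slit_disc m \<Longrightarrow> (R has_field_derivative exp (- w) / w) (at w)"
  shows "R (of_nat m) - R 1 = of_real (integral {1..real m} (\<lambda>t. exp (- t) / t))"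
proof -
  have "((\<lambda>t. exp (- t) / t) has_integral integral {1..real m} (\<lambda>t. exp (- t) / t)) {1..real m}"
    by (intro integrable_integral integrable_continuous_interval continuous_intros) auto
  then have "((\<lambda>x. complex_of_real (exp (- x) / x)) has_integral
      complex_of_real (integral {1..real m} (\<lambda>t. exp (- t) / t))) {1..real m}"
    by (rule has_integral_of_real)
  moreover have "exp (- complex_of_real x) = of_real (exp (- x))" for x
    using exp_of_real[of "- x"] by simp
  ultimately have "((\<lambda>x. exp (- of_real x) / of_real x) has_integral
      complex_of_real (integral {1..real m} (\<lambda>t. exp (- t) / t))) {1..real m}"
    by simp
  with primitive_diff_has_integral_real[OF m R] show ?thesis
    by (rule has_integral_unique)
qed

lemma norm_primitive_diff_phi_sub_exp_neg_div_le:
  assumes m: "2 \<le> m"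
    and P: "\<And>w. w \<in> slit_disc m \<Longrightarrow> (P has_field_derivative phi m w) (at w)"
    and R: "\<And>w. w \<in> slit_disc m \<Longrightarrow> (R has_field_derivative exp (- w) / w) (at w)"
  shows "cmod ((P (of_nat m) - P 1) - (R (of_nat m) - R 1)) \<le> 11 * ln m / m"
proof -
  have mpos: "0 < real m" using m by simp
  let ?D = "\<lambda>x::real. phi m (of_real x) - exp (- of_real x) / of_real x"
  have D: "(?D has_integral ((P (of_nat m) - P 1) - (R (of_nat m) - R 1))) {1..real m}"
    by (rule has_integral_diff[OF primitive_diff_has_integral_real[OF m P]
          primitive_diff_has_integral_real[OF m R]])
  have "((\<lambda>x. 11 / (real m * x)) has_integral (11 * ln m / m - 11 * ln 1 / m)) {1..real m}"
  proof (rule fundamental_theorem_of_calculus)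
    fix x assume x: "x \<in> {1..real m}"
    have "((\<lambda>x. 11 * ln x / m) has_real_derivative 11 / (m * x)) (at x)"
      using x by (auto intro!: derivative_eq_intros simp: field_simps)
    then show "((\<lambda>x. 11 * ln x / m) has_vector_derivative 11 / (m * x)) (at x within {1..real m})"
      by (simp add: has_real_derivative_iff_has_vector_derivative[symmetric] has_field_derivative_at_within)
  qed (use m in simp)
  then have G: "((\<lambda>x. 11 / (real m * x)) has_integral (11 * ln m / m)) {1..real m}" by simp
  have bound: "norm (?D x) \<le> 11 / (real m * x)" if x: "x \<in> {1..real m}" for x
  proof -
    have x1: "1 \<le> x" "x \<le> real m" using x by auto
    have "?D x = of_real (((1 - x / m) ^ (2 * Mm m + 2) / (1 - x / (2 * real m)) - exp (- x)) / x)"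
      by (simp add: phi_def diff_divide_distrib flip: exp_of_real)
    then have "norm (?D x) = \<bar>(1 - x / m) ^ (2 * Mm m + 2) / (1 - x / (2 * real m)) - exp (- x)\<bar> / x"
      using x1 by (simp only: norm_of_real abs_divide)
    also have "\<dots> \<le> (11 / m) / x"
      using abs_power_one_minus_div_sub_exp_le[of m "2 * Mm m + 2" x] Mm_exponent_bounds[of m] m x1
      by (intro divide_right_mono) auto
    finally show ?thesis by simp
  qed
  have "norm (integral {1..real m} ?D) \<le> integral {1..real m} (\<lambda>x. 11 / (real m * x))"
    by (rule integral_norm_bound_integral) (use D G bound in auto)
  then show ?thesis using D G by (simp add: integral_unique)
qed

lemma exp_neg_div_integrable_on_atLeast:
  fixes b :: real
  assumes b: "1 \<le> b"
  shows "(\<lambda>t. exp (- t) / t) integrable_on {b..}"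
proof (rule measurable_bounded_by_integrable_imp_integrable)
  show "{b..} \<in> sets lebesgue" by simp
  then show "(\<lambda>t. exp (- t) / t) \<in> borel_measurable (lebesgue_on {b..})"
    using b by (intro continuous_imp_measurable_on_sets_lebesgue) (auto intro!: continuous_intros)
  show "(\<lambda>t. exp (- 1 * t)) integrable_on {b..}" by (rule integrable_on_exp_minus_to_infinity) simp
  fix t assume "t \<in> {b..}"
  then have "1 \<le> t" using b by simp
  then show "norm (exp (- t) / t) \<le> exp (- 1 * t)" by (simp add: divide_le_eq mult_le_cancel_left1)
qed

lemma abs_E1one_sub_integral_le:
  fixes a :: real
  assumes a: "1 \<le> a"
  shows "\<bar>E1one - integral {1..a} (\<lambda>t. exp (- t) / t)\<bar> \<le> exp (- a)"
proof -
  let ?f = "\<lambda>t::real. exp (- t) / t"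
  have "(?f has_integral integral {1..a} ?f) {1..a}"
    by (intro integrable_integral integrable_continuous_interval continuous_intros) auto
  moreover have "(?f has_integral integral {a..} ?f) {a..}"
    using exp_neg_div_integrable_on_atLeast[OF a] by (rule integrable_integral)
  ultimately have "(?f has_integral (integral {1..a} ?f + integral {a..} ?f)) ({1..a} \<union> {a..})"
    by (rule has_integral_Un) (use a in \<open>auto intro: negligible_subset[OF negligible_sing[of a]]\<close>)
  moreover have "{1..a} \<union> {a..} = {1::real..}" using a by auto
  ultimately have "E1one = integral {1..a} ?f + integral {a..} ?f"
    unfolding E1one_def by (simp add: integral_unique)
  moreover have "0 \<le> integral {a..} ?f"
    by (rule integral_nonneg[OF exp_neg_div_integrable_on_atLeast[OF a]]) (use a in auto)
  moreover have "integral {a..} ?f \<le> integral {a..} (\<lambda>t. exp (- 1 * t))"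
  proof (rule integral_le[OF exp_neg_div_integrable_on_atLeast[OF a]])
    show "(\<lambda>t. exp (- 1 * t)) integrable_on {a..}" by (rule integrable_on_exp_minus_to_infinity) simp
    fix t assume "t \<in> {a..}"
    then have "1 \<le> t" using a by simp
    then show "exp (- t) / t \<le> exp (- 1 * t)" by (simp add: divide_le_eq mult_le_cancel_left1)
  qed
  moreover have "integral {a..} (\<lambda>t. exp (- 1 * t)) = exp (- a)"
    using has_integral_exp_minus_to_infinity[of 1 a] by (simp add: integral_unique)
  ultimately show ?thesis by simp
qed

lemma norm_E1one_sub_exp_neg_div_primitive_diff_le:
  assumes m: "2 \<le> m" and R: "\<And>w. w \<in> slit_disc m \<Longrightarrow> (R has_field_derivative exp (- w) / w) (at w)"
  shows "cmod (complex_of_real E1one - (R (of_nat m) - R 1)) \<le> 1 / m"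
proof -
  have "complex_of_real E1one - (R (of_nat m) - R 1)
      = of_real (E1one - integral {1..real m} (\<lambda>t. exp (- t) / t))"
    using exp_neg_div_primitive_diff_eq_integral[OF m R] by simp
  then have "cmod (complex_of_real E1one - (R (of_nat m) - R 1))
      = \<bar>E1one - integral {1..real m} (\<lambda>t. exp (- t) / t)\<bar>"
    by (simp only: norm_of_real)
  also have "\<dots> \<le> exp (- real m)" using abs_E1one_sub_integral_le m by simp
  also have "\<dots> \<le> 1 / m"
    using exp_ge_add_one_self[of "real m"] m by (simp add: exp_minus field_simps del: exp_ge_add_one_self)
  finally show ?thesis .
qed

section \<open>The slit annulus\<close>

definition slit_annulus :: "real \<Rightarrow> real \<Rightarrow> complex set" where
  "slit_annulus c C = {\<zeta>. \<not> (Im \<zeta> = 0 \<and> Re \<zeta> \<le> 0) \<and> c \<le> cmod \<zeta> \<and> cmod \<zeta> \<le> C}"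

lemma slit_annulus_subset_slit_disc:
  assumes "1 \<le> m" "C \<le> real m"
  shows "slit_annulus c C \<subseteq> slit_disc m"
  using assms by (auto simp: slit_annulus_def slit_disc_def in_slot_left_iff)

lemma rescaled_in_slit_annulus:
  assumes m: "0 < m" and z: "c / m \<le> cmod (z - \<i>)" "cmod (z - \<i>) \<le> C / m" "z \<notin> upper_ray"
  shows "\<i> * of_nat m * (z - \<i>) \<in> slit_annulus c C"
proof -
  define w where "w = \<i> * of_nat m * (z - \<i>)"
  have mpos: "0 < real m" using m by simp
  have "cmod w = real m * cmod (z - \<i>)" by (simp add: w_def norm_mult)
  then have "c \<le> cmod w" "cmod w \<le> C" using z mpos by (simp_all add: field_simps)
  moreover have "\<not> (Im w = 0 \<and> Re w \<le> 0)"
  proof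
    assume w: "Im w = 0 \<and> Re w \<le> 0"
    have "Im w = real m * Re z" "Re w = real m * (1 - Im z)" by (simp_all add: w_def algebra_simps)
    then have "Re z = 0" "real m * (1 - Im z) \<le> 0" using w mpos by simp_all
    moreover from this(2) have "1 \<le> Im z" using mpos by (smt (verit) mult_pos_pos)
    ultimately have "z \<in> upper_ray"
      unfolding upper_ray_def by (intro CollectI exI[of _ "Im z"]) (simp add: complex_eq_iff)
    then show False using z by simp
  qed
  ultimately have "w \<in> slit_annulus c C" by (simp add: slit_annulus_def)
  then show ?thesis by (simp add: w_def)
qed

lemma polar_in_slit_annulus:
  assumes "0 < c" "c \<le> r" "r \<le> C" "-pi < t" "t < pi"
  shows "of_real r * exp (\<i> * of_real t) \<in> slit_annulus c C"
proof -
  have r: "0 < r" using assms by linarith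
  have "\<not> (Im (of_real r * exp (\<i> * of_real t)) = 0 \<and> Re (of_real r * exp (\<i> * of_real t)) \<le> 0)"
  proof
    assume h: "Im (of_real r * exp (\<i> * of_real t)) = 0 \<and> Re (of_real r * exp (\<i> * of_real t)) \<le> 0"
    then have "sin t = 0" using r by (simp add: Im_exp)
    then have "t = 0" using sin_eq_0_pi assms by blast
    then show False using h r by simp
  qed
  then show ?thesis using assms r by (simp add: slit_annulus_def norm_mult)
qed

lemma one_in_slit_annulus: "0 < c \<Longrightarrow> c \<le> 1 \<Longrightarrow> 1 \<le> C \<Longrightarrow> 1 \<in> slit_annulus c C"
  by (simp add: slit_annulus_def)

lemma norm_primitive_diff_le_unit_arc:
  assumes P: "\<And>w. w \<in> slit_annulus c C \<Longrightarrow> (P has_field_derivative f w) (at w)"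
    and B: "\<And>w. w \<in> slit_annulus c C \<Longrightarrow> cmod (f w) \<le> B"
    and c: "0 < c" "c \<le> 1" "1 \<le> C" and st: "-pi < s" "s \<le> t" "t < pi"
  shows "cmod (P (exp (\<i> * of_real t)) - P (exp (\<i> * of_real s))) \<le> B * (t - s)"
proof -
  let ?g = "part_circlepath 0 1 s t"
  have img: "path_image ?g \<subseteq> slit_annulus c C"
    using polar_in_slit_annulus[of c 1 C] c st by (auto simp: path_image_part_circlepath)
  have "(f has_contour_integral (P (exp (\<i> * of_real t)) - P (exp (\<i> * of_real s)))) ?g"
    using contour_integral_primitive[of "slit_annulus c C" P f ?g] P img
    by (auto intro: has_field_derivative_at_within)
  moreover have "0 \<le> B" using B[OF one_in_slit_annulus[OF c]] norm_ge_zero order_trans by blast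
  ultimately have "cmod (P (exp (\<i> * of_real t)) - P (exp (\<i> * of_real s))) \<le> B * 1 * (t - s)"
    using img B st by (intro has_contour_integral_bound_part_circlepath[of f]) auto
  then show ?thesis by simp
qed

lemma norm_primitive_diff_le_radial:
  assumes P: "\<And>w. w \<in> slit_annulus c C \<Longrightarrow> (P has_field_derivative f w) (at w)"
    and B: "\<And>w. w \<in> slit_annulus c C \<Longrightarrow> cmod (f w) \<le> B"
    and c: "0 < c" "c \<le> 1" "1 \<le> C" and r: "c \<le> r" "r \<le> C" and t: "-pi < t" "t < pi"
  shows "cmod (P (of_real r * exp (\<i> * of_real t)) - P (exp (\<i> * of_real t))) \<le> B * C"
proof -
  define e where "e = exp (\<i> * of_real t)"
  have B0: "0 \<le> B" using B[OF one_in_slit_annulus[OF c]] norm_ge_zero order_trans by blast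
  have img: "closed_segment e (of_real r * e) \<subseteq> slit_annulus c C"
  proof
    fix w assume "w \<in> closed_segment e (of_real r * e)"
    then obtain u where u: "0 \<le> u" "u \<le> 1" and w: "w = of_real ((1 - u) + u * r) * e"
      by (auto simp: closed_segment_def scaleR_conv_of_real algebra_simps)
    have "(1 - u) * c + u * c \<le> (1 - u) * 1 + u * r" "(1 - u) * 1 + u * r \<le> (1 - u) * C + u * C"
      using u c r by (intro add_mono mult_left_mono; simp)+
    then show "w \<in> slit_annulus c C"
      using polar_in_slit_annulus[of c "(1 - u) + u * r" C t] c t by (simp add: w e_def algebra_simps)
  qed
  have "(f has_contour_integral (P (of_real r * e) - P e)) (linepath e (of_real r * e))"
    using contour_integral_primitive[of "slit_annulus c C" P f "linepath e (of_real r * e)"] P img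
    by (auto intro: has_field_derivative_at_within)
  then have "cmod (P (of_real r * e) - P e) \<le> B * cmod (of_real r * e - e)"
    by (rule has_contour_integral_bound_linepath) (use B0 img B in auto)
  also have "cmod (of_real r * e - e) = \<bar>r - 1\<bar>"
    using norm_mult[of "of_real (r - 1)" e] norm_of_real[of "r - 1"] by (simp add: e_def algebra_simps)
  also have "B * \<bar>r - 1\<bar> \<le> B * C" using r c B0 by (intro mult_left_mono) auto
  finally show ?thesis by (simp add: e_def)
qed

text \<open>Integrate along the unit circle from \<open>1\<close> to \<open>w / \<bar>w\<bar>\<close>, then radially to \<open>w\<close>.\<close>
lemma norm_primitive_diff_le_slit_annulus:
  assumes P: "\<And>w. w \<in> slit_annulus c C \<Longrightarrow> (P has_field_derivative f w) (at w)"
    and B: "\<And>w. w \<in> slit_annulus c C \<Longrightarrow> cmod (f w) \<le> B"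
    and c: "0 < c" "c \<le> 1" "1 \<le> C" and w: "w \<in> slit_annulus c C"
  shows "cmod (P w - P 1) \<le> B * (pi + C)"
proof -
  define t where "t = Arg w"
  have w_polar: "w = of_real (cmod w) * exp (\<i> * of_real t)"
    using rcis_cmod_Arg[of w] by (simp add: t_def rcis_def cis_conv_exp)
  have t: "-pi < t" "t < pi"
    using Arg_bounded[of w] Arg_eq_pi[of w] w by (auto simp: t_def slit_annulus_def)
  have "cmod (P w - P (exp (\<i> * of_real t))) \<le> B * C"
    using norm_primitive_diff_le_radial[OF P B c _ _ t, of "cmod w"] w
    by (simp add: slit_annulus_def flip: w_polar)
  moreover have "cmod (P (exp (\<i> * of_real t)) - P 1) \<le> B * pi"
  proof -
    have B0: "0 \<le> B" using B[OF one_in_slit_annulus[OF c]] norm_ge_zero order_trans by blast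
    have "cmod (P (exp (\<i> * of_real t)) - P 1) \<le> B * \<bar>t\<bar>"
    proof (cases "0 \<le> t")
      case True
      then show ?thesis using norm_primitive_diff_le_unit_arc[OF P B c, of 0 t] t by simp
    next
      case False
      then show ?thesis
        using norm_primitive_diff_le_unit_arc[OF P B c, of t 0] t by (simp add: norm_minus_commute)
    qed
    also have "\<dots> \<le> B * pi" using B0 t by (intro mult_left_mono) auto
    finally show ?thesis .
  qed
  ultimately have "cmod (P w - P 1) \<le> B * C + B * pi" by (rule norm_diff_triangle_le)
  then show ?thesis by (simp add: algebra_simps)
qed

lemma norm_exp_neg_div_le_slit_annulus:
  assumes "0 < c" "w \<in> slit_annulus c C"
  shows "cmod (exp (- w) / w) \<le> exp C / c"
proof -
  have "cmod w \<le> C" using assms by (simp add: slit_annulus_def)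
  then have "cmod (exp (- w)) \<le> exp C"
    using abs_Re_le_cmod[of w] by simp
  then show ?thesis
    using assms unfolding norm_divide by (intro frac_le) (auto simp: slit_annulus_def)
qed

lemma norm_phi_sub_exp_neg_div_le_slit_annulus:
  assumes m: "1 \<le> m" "C \<le> real m" and c: "0 < c" and w: "w \<in> slit_annulus c C"
  shows "cmod (phi m w - exp (- w) / w) \<le> phi_approx_const C / m / c"
proof -
  have wc: "c \<le> cmod w" and wC: "cmod w \<le> C" using w by (auto simp: slit_annulus_def)
  have "phi m w - exp (- w) / w
      = ((1 - w / m) ^ (2 * Mm m + 2) / (1 - w / (2 * of_nat m)) - exp (- w)) / w"
    by (simp add: phi_def diff_divide_distrib divide_divide_eq_left mult.commute)
  then have "cmod (phi m w - exp (- w) / w)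
      = cmod ((1 - w / m) ^ (2 * Mm m + 2) / (1 - w / (2 * of_nat m)) - exp (- w)) / cmod w"
    by (simp add: norm_divide)
  also have "\<dots> \<le> (phi_approx_const C / m) / c"
    using norm_power_one_minus_div_sub_exp_le[OF m(1) Mm_exponent_bounds[OF m(1)] m(2) wC]
      wc c order_trans[OF norm_ge_zero wC]
    by (intro frac_le) (auto simp: phi_approx_const_def intro!: divide_nonneg_nonneg)
  finally show ?thesis .
qed

section \<open>Asymptotics of \<open>ftilde\<close>\<close>

lemma norm_ftilde_sub_approx_le:
  assumes c: "0 < c" "c \<le> 1" "1 \<le> C" and m: "2 \<le> m" "C \<le> real m"
    and z: "\<i> * of_nat m * (z - \<i>) \<in> slit_annulus c C"
    and P: "\<And>v. v \<in> slit_disc m \<Longrightarrow> (P has_field_derivative phi m v) (at v)"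
    and R: "\<And>v. v \<in> slit_disc m \<Longrightarrow> (R has_field_derivative exp (- v) / v) (at v)"
  defines "w \<equiv> \<i> * of_nat m * (z - \<i>)"
  shows "cmod (ftilde m z - (complex_of_real E1one / (2 * \<i>) - (R w - R 1) / (2 * \<i>)))
           \<le> phi_approx_const C * (pi + C) / c / m + 11 * ln m / m + 1 / m"
proof -
  have m1: "1 \<le> m" and mpos: "0 < real m" using m by auto
  have sub: "slit_annulus c C \<subseteq> slit_disc m" by (rule slit_annulus_subset_slit_disc[OF m1 m(2)])
  define X1 where "X1 = (P w - R w) - (P 1 - R 1)"
  define X2 where "X2 = (P (of_nat m) - P 1) - (R (of_nat m) - R 1)"
  define X3 where "X3 = complex_of_real E1one - (R (of_nat m) - R 1)"
  have ft: "ftilde m z = - (1 / (2 * \<i>)) * (P w - P (of_nat m))"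
    using ftilde_eq_primitive_diff[OF m1 P] z sub by (auto simp: w_def)
  have "ftilde m z - (complex_of_real E1one / (2 * \<i>) - (R w - R 1) / (2 * \<i>))
      = - (1 / (2 * \<i>)) * (X1 - X2 + X3)"
    unfolding ft X1_def X2_def X3_def by (simp add: field_simps)
  moreover have "cmod (- (1 / (2 * \<i>))) = 1 / 2" by (simp add: norm_divide norm_mult)
  ultimately have "cmod (ftilde m z - (complex_of_real E1one / (2 * \<i>) - (R w - R 1) / (2 * \<i>)))
      = cmod (X1 - X2 + X3) / 2"
    by (simp only: norm_mult)
  also have "\<dots> \<le> cmod X1 + cmod X2 + cmod X3"
    using norm_triangle_ineq[of "X1 - X2" X3] norm_triangle_ineq4[of X1 X2] norm_ge_zero[of X3]
      norm_ge_zero[of "X1 - X2 + X3"] by linarith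
  also have "\<dots> \<le> phi_approx_const C * (pi + C) / c / m + 11 * ln m / m + 1 / m"
  proof (intro add_mono)
    have "\<And>v. v \<in> slit_annulus c C \<Longrightarrow>
        ((\<lambda>v. P v - R v) has_field_derivative phi m v - exp (- v) / v) (at v)"
      using P R sub by (blast intro: DERIV_diff)
    then have "cmod X1 \<le> phi_approx_const C / m / c * (pi + C)"
      unfolding X1_def w_def
      by (rule norm_primitive_diff_le_slit_annulus[OF _
            norm_phi_sub_exp_neg_div_le_slit_annulus[OF m1 m(2) c(1)] c z])
    then show "cmod X1 \<le> phi_approx_const C * (pi + C) / c / m" by (simp add: mult.commute)
    show "cmod X2 \<le> 11 * ln m / m"
      unfolding X2_def by (rule norm_primitive_diff_phi_sub_exp_neg_div_le[OF m(1) P R])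
    show "cmod X3 \<le> 1 / m"
      unfolding X3_def by (rule norm_E1one_sub_exp_neg_div_primitive_diff_le[OF m(1) R])
  qed
  finally show ?thesis .
qed

lemma approx_error_le_ln_div:
  fixes a :: real and m :: nat
  assumes "3 \<le> m" "0 \<le> a"
  shows "a / m + 11 * ln m / m + 1 / m \<le> (a + 12) * (ln m / m)"
proof -
  have "exp 1 \<le> real m" and "0 < real m" using exp_le assms(1) by linarith+
  then have "1 \<le> ln (real m)" by (simp add: ln_ge_iff)
  then have "a + 11 * ln m + 1 \<le> (a + 12) * ln m"
    using mult_left_mono[of 1 "ln m" a] assms(2) by (simp add: algebra_simps)
  then have "(a + 11 * ln m + 1) / m \<le> (a + 12) * ln m / m" by (rule divide_right_mono) simp
  then show ?thesis by (simp add: add_divide_distrib)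
qed

lemma ftilde_approx:
  assumes c: "0 < c" "c \<le> 1" "1 \<le> C" and m: "3 \<le> m" "C \<le> real m"
    and z: "\<i> * of_nat m * (z - \<i>) \<in> slit_annulus c C"
  obtains A where "cmod A \<le> exp C / c * (pi + C)"
    and "\<And>\<gamma>. valid_path \<gamma> \<Longrightarrow> pathstart \<gamma> = 1 \<Longrightarrow> pathfinish \<gamma> = \<i> * of_nat m * (z - \<i>) \<Longrightarrow>
           path_image \<gamma> \<subseteq> slit_annulus c C \<Longrightarrow> contour_integral \<gamma> (\<lambda>\<zeta>. exp (- \<zeta>) / \<zeta>) = A"
    and "cmod (ftilde m z - (complex_of_real E1one / (2 * \<i>) - A / (2 * \<i>)))
           \<le> (phi_approx_const C * (pi + C) / c + 12) * (ln m / m)"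
proof -
  define w where "w = \<i> * of_nat m * (z - \<i>)"
  have m1: "1 \<le> m" and m2: "2 \<le> m" using m by auto
  have sub: "slit_annulus c C \<subseteq> slit_disc m" by (rule slit_annulus_subset_slit_disc[OF m1 m(2)])
  obtain P where P: "\<And>v. v \<in> slit_disc m \<Longrightarrow> (P has_field_derivative phi m v) (at v)"
    using slit_disc_primitive[OF m1 phi_holomorphic] by blast
  obtain R where R: "\<And>v. v \<in> slit_disc m \<Longrightarrow> (R has_field_derivative exp (- v) / v) (at v)"
    using slit_disc_primitive[OF m1 exp_neg_div_holomorphic] by blast
  show ?thesis
  proof (rule that[of "R w - R 1"])
    have "\<And>v. v \<in> slit_annulus c C \<Longrightarrow> (R has_field_derivative exp (- v) / v) (at v)"
      using R sub by blast
    then show "cmod (R w - R 1) \<le> exp C / c * (pi + C)"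
      unfolding w_def
      by (rule norm_primitive_diff_le_slit_annulus[OF _ norm_exp_neg_div_le_slit_annulus[OF c(1)] c z])
    fix \<gamma> assume \<gamma>: "valid_path \<gamma>" "pathstart \<gamma> = 1" "pathfinish \<gamma> = \<i> * of_nat m * (z - \<i>)"
      "path_image \<gamma> \<subseteq> slit_annulus c C"
    have "((\<lambda>\<zeta>. exp (- \<zeta>) / \<zeta>) has_contour_integral R (pathfinish \<gamma>) - R (pathstart \<gamma>)) \<gamma>"
      using contour_integral_primitive[of "slit_disc m" R "\<lambda>\<zeta>. exp (- \<zeta>) / \<zeta>" \<gamma>] R \<gamma>(1,4) sub
      by (auto intro: has_field_derivative_at_within)
    then show "contour_integral \<gamma> (\<lambda>\<zeta>. exp (- \<zeta>) / \<zeta>) = R w - R 1"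
      using \<gamma>(2,3) by (simp add: w_def contour_integral_unique)
  next
    have a0: "0 \<le> phi_approx_const C * (pi + C) / c" using c by (simp add: phi_approx_const_def)
    show "cmod (ftilde m z - (complex_of_real E1one / (2 * \<i>) - (R w - R 1) / (2 * \<i>)))
        \<le> (phi_approx_const C * (pi + C) / c + 12) * (ln m / m)"
      unfolding w_def
      by (rule order_trans[OF norm_ftilde_sub_approx_le[OF c m2 m(2) z P R] approx_error_le_ln_div[OF m(1) a0]])
  qed
qed

lemma ftilde_asymptotics:
  fixes c C :: real
  defines "K \<equiv> phi_approx_const C * (pi + C) / c + 12 + \<bar>E1one\<bar> + exp C / c * (pi + C)"
  assumes c: "0 < c" "c \<le> 1" "1 \<le> C" and m: "nat \<lceil>C\<rceil> + 3 \<le> m"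
    and z: "c / m \<le> cmod (z - \<i>)" "cmod (z - \<i>) \<le> C / m" "z \<notin> upper_ray"
  shows "cmod (ftilde m z) \<le> K \<and>
      (\<forall>\<gamma>. valid_path \<gamma> \<and> pathstart \<gamma> = 1 \<and> pathfinish \<gamma> = \<i> * of_nat m * (z - \<i>) \<and>
           path_image \<gamma> \<subseteq> slit_annulus c C \<longrightarrow>
         cmod (ftilde m z - (complex_of_real E1one / (2 * \<i>)
                  - contour_integral \<gamma> (\<lambda>\<zeta>. exp (- \<zeta>) / \<zeta>) / (2 * \<i>)))
           \<le> K * ln (real m) / real m)"
proof -
  define Kerr where "Kerr = phi_approx_const C * (pi + C) / c + 12"
  have Kerr: "0 \<le> Kerr" "Kerr \<le> K"
    using c by (auto simp: Kerr_def K_def phi_approx_const_def)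
  have m3: "3 \<le> m" and Cm: "C \<le> real m" using m by linarith+
  have ln_m: "0 \<le> ln m / m" "ln m / m \<le> 1"
    using m3 ln_le_minus_one[of "real m"] by (auto simp: divide_le_eq)
  obtain A where A: "cmod A \<le> exp C / c * (pi + C)"
    and A_int: "\<And>\<gamma>. valid_path \<gamma> \<Longrightarrow> pathstart \<gamma> = 1 \<Longrightarrow> pathfinish \<gamma> = \<i> * of_nat m * (z - \<i>) \<Longrightarrow>
         path_image \<gamma> \<subseteq> slit_annulus c C \<Longrightarrow> contour_integral \<gamma> (\<lambda>\<zeta>. exp (- \<zeta>) / \<zeta>) = A"
    and err: "cmod (ftilde m z - (complex_of_real E1one / (2 * \<i>) - A / (2 * \<i>))) \<le> Kerr * (ln m / m)"
    using ftilde_approx[OF c m3 Cm rescaled_in_slit_annulus[OF _ z]] m3 unfolding Kerr_def by auto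
  have "cmod (complex_of_real E1one / (2 * \<i>) - A / (2 * \<i>)) \<le> \<bar>E1one\<bar> / 2 + cmod A / 2"
    using norm_triangle_ineq4[of "complex_of_real E1one / (2 * \<i>)" "A / (2 * \<i>)"]
    by (simp add: norm_divide norm_mult)
  moreover have "Kerr * (ln m / m) \<le> Kerr" using mult_left_le[OF ln_m(2) Kerr(1)] .
  ultimately have "cmod (ftilde m z) \<le> K"
    using norm_triangle_sub[of "ftilde m z" "complex_of_real E1one / (2 * \<i>) - A / (2 * \<i>)"]
      err A abs_ge_zero[of E1one] norm_ge_zero[of A]
    unfolding K_def Kerr_def by linarith
  moreover have "Kerr * (ln m / m) \<le> K * (ln m / m)" using mult_right_mono[OF Kerr(2) ln_m(1)] .
  ultimately show ?thesis using err A_int by (auto simp: times_divide_eq_right)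
qed

theorem lemma3:
  fixes c C :: real
  assumes "0 < c" "c < 1" "1 < C"
  shows "\<exists>K N. \<forall>m \<ge> N. \<forall>z.
           c / real m \<le> cmod (z - \<i>) \<and> cmod (z - \<i>) \<le> C / real m \<and> z \<notin> upper_ray \<longrightarrow>
             cmod (ftilde m z) \<le> K \<and>
             (\<forall>\<gamma>. valid_path \<gamma> \<and> pathstart \<gamma> = 1 \<and>
                   pathfinish \<gamma> = \<i> * of_nat m * (z - \<i>) \<and>
                   path_image \<gamma> \<subseteq> {\<zeta>. \<not> (Im \<zeta> = 0 \<and> Re \<zeta> \<le> 0) \<and> c \<le> cmod \<zeta> \<and> cmod \<zeta> \<le> C}
                 \<longrightarrow> cmod (ftilde m z
                        - (complex_of_real E1one / (2 * \<i>)
                           - contour_integral \<gamma> (\<lambda>\<zeta>. exp (- \<zeta>) / \<zeta>) / (2 * \<i>)))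
                     \<le> K * ln (real m) / real m)"
  unfolding slit_annulus_def[symmetric]
  using assms by (intro exI allI impI; elim conjE) (rule ftilde_asymptotics; simp)

end
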